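(* Fix an integer $r \geq 2$. There exist constants $\alpha > 0$ and $C' > 0$ such that for all integers $n \geq 1$, $m \leq n$ and $2 \leq k \leq m$, the probability that a random DFA with $n$ states over an alphabet of size $r$ contains a $k$-periodic closed communicating class of size $m$ is at most $C' e^{-\alpha m}$.
   Context: A DFA is a tuple $A = \langle \Sigma, Q, q_0, \tau, \phi\rangle$ with finite alphabet $\Sigma$, finite state set $Q$, initial state $q_0$, transition function $\tau : Q \times \Sigma \to Q$ and termination function $\phi : Q \to \{0,1\}$. Extend $\tau$ to strings as usual and write $\tau_\star(S) = \{\tau(q,x) : q \in S, x \in \Sigma^\star\}$ and $\tau_1(S) = \{\tau(q,\sigma): q \in S, \sigma \in \Sigma\}$ for $S \subseteq Q$. Two states communicate if each is reachable from the other by some string; the equivalence classes are communicating classes. A communicating class $Q'$ is closed if $\tau_\star(Q') = Q'$. For $k > 1$, a closed communicating class $Q'$ is $k$-periodic if there is a partition of $Q'$ into $k$ nonempty parts $Q'_0,\ldots,Q'_{k-1}$ with $\tau_1(Q'_i) = Q'_{(i+1) \bmod k}$ for all $i$. A random DFA with $n$ states over an alphabet $\Sigma$ of size $r$: $Q = [n]$, initial state uniform in $Q$, each $\tau(q,\sigma)$ uniform in $Q$, each $\phi(q)$ uniform in $\{0,1\}$, all independent. *)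

theory Defs
  imports "HOL-Probability.Probability"
begin

text \<open>States are Q = {0..<n}, alphabet Sigma = {0..<r}. A DFA is a triple
  (q0, tau, phi); tau is represented as a function on pairs (state, letter).\<close>

type_synonym dfa = "nat \<times> (nat \<times> nat \<Rightarrow> nat) \<times> (nat \<Rightarrow> bool)"

definition trans :: "dfa \<Rightarrow> nat \<times> nat \<Rightarrow> nat" where
  "trans D = fst (snd D)"

fun tau_word :: "(nat \<times> nat \<Rightarrow> nat) \<Rightarrow> nat \<Rightarrow> nat list \<Rightarrow> nat" where
  "tau_word \<tau> q [] = q"
| "tau_word \<tau> q (a # w) = tau_word \<tau> (\<tau> (q, a)) w"

definition tau_star :: "nat \<Rightarrow> (nat \<times> nat \<Rightarrow> nat) \<Rightarrow> nat set \<Rightarrow> nat set" where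
  "tau_star r \<tau> S = {tau_word \<tau> q w | q w. q \<in> S \<and> w \<in> lists {..<r}}"

definition tau_one :: "nat \<Rightarrow> (nat \<times> nat \<Rightarrow> nat) \<Rightarrow> nat set \<Rightarrow> nat set" where
  "tau_one r \<tau> S = {\<tau> (q, a) | q a. q \<in> S \<and> a \<in> {..<r}}"

definition communicate :: "nat \<Rightarrow> (nat \<times> nat \<Rightarrow> nat) \<Rightarrow> nat \<Rightarrow> nat \<Rightarrow> bool" where
  "communicate r \<tau> p q \<longleftrightarrow> q \<in> tau_star r \<tau> {p} \<and> p \<in> tau_star r \<tau> {q}"

definition comm_class :: "nat \<Rightarrow> nat \<Rightarrow> (nat \<times> nat \<Rightarrow> nat) \<Rightarrow> nat set \<Rightarrow> bool" where
  "comm_class n r \<tau> C \<longleftrightarrow> (\<exists>q \<in> {..<n}. C = {p \<in> {..<n}. communicate r \<tau> q p})"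

definition closed_comm_class :: "nat \<Rightarrow> nat \<Rightarrow> (nat \<times> nat \<Rightarrow> nat) \<Rightarrow> nat set \<Rightarrow> bool" where
  "closed_comm_class n r \<tau> C \<longleftrightarrow> comm_class n r \<tau> C \<and> tau_star r \<tau> C = C"

definition periodic_class :: "nat \<Rightarrow> nat \<Rightarrow> nat \<Rightarrow> (nat \<times> nat \<Rightarrow> nat) \<Rightarrow> nat set \<Rightarrow> bool" where
  "periodic_class k n r \<tau> C \<longleftrightarrow> k > 1 \<and> closed_comm_class n r \<tau> C \<and>
     (\<exists>P :: nat \<Rightarrow> nat set.
        (\<forall>i<k. P i \<noteq> {}) \<and>
        (\<forall>i<k. \<forall>j<k. i \<noteq> j \<longrightarrow> P i \<inter> P j = {}) \<and>
        (\<Union>i<k. P i) = C \<and>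
        (\<forall>i<k. tau_one r \<tau> (P i) = P ((i + 1) mod k)))"

definition has_periodic_class :: "nat \<Rightarrow> nat \<Rightarrow> nat \<Rightarrow> nat \<Rightarrow> dfa \<Rightarrow> bool" where
  "has_periodic_class n r k m D \<longleftrightarrow>
     (\<exists>C. periodic_class k n r (trans D) C \<and> card C = m)"

definition dfa_space :: "nat \<Rightarrow> nat \<Rightarrow> dfa set" where
  "dfa_space n r = {(q0, \<tau>, \<phi>). q0 \<in> {..<n} \<and>
       \<tau> \<in> ({..<n} \<times> {..<r}) \<rightarrow>\<^sub>E {..<n} \<and> \<phi> \<in> {..<n} \<rightarrow>\<^sub>E (UNIV :: bool set)}"

definition random_dfa :: "nat \<Rightarrow> nat \<Rightarrow> dfa pmf" where
  "random_dfa n r = pmf_of_set (dfa_space n r)"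

end

theory Submission
  imports Defs
begin

text \<open>If a \<open>k\<close>-periodic closed class \<open>C\<close> of size \<open>m\<close> exists, let \<open>P\<^sub>0\<close> be a smallest part, of
  size \<open>p \<le> m / 2\<close>.  Every letter maps \<open>P\<^sub>0\<close> onto \<open>P\<^sub>1\<close>, \<open>P\<^sub>1\<close> onto \<open>P\<^sub>2\<close>, \<open>\<dots>\<close>, and \<open>P\<^sub>k\<^sub>-\<^sub>1\<close> back into
  \<open>P\<^sub>0\<close>.  Counting such layered transition functions letter by letter, and keeping the factors
  of only two letters, bounds the probability for fixed \<open>C\<close> and \<open>P\<^sub>0\<close> by
  \<open>((m - p)^m exp (2 p - m) / n^m)^2\<close>.  Entropy estimates show that this, multiplied by the
  \<open>(n choose m) (m choose p)\<close> choices of \<open>C\<close> and \<open>P\<^sub>0\<close>, is at most \<open>exp (- (3/4 - 2/e) m)\<close>,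
  and \<open>3/4 - 2/e > 0\<close>; summing over \<open>p\<close> costs only a factor \<open>m\<close>.\<close>

section \<open>Factorial and entropy estimates\<close>

lemma pow_mult_fact_le_fact:
  assumes "a \<ge> 1"
  shows "a ^ s * fact (a - 1) \<le> (fact (a + s - 1) :: nat)"
proof (induction s)
  case (Suc s)
  have "a ^ Suc s * fact (a - 1) = a * (a ^ s * fact (a - 1))" by simp
  also have "\<dots> \<le> (a + s) * fact (a + s - 1)" using Suc by (intro mult_mono) auto
  also have "\<dots> = fact (a + Suc s - 1)" using assms fact_reduce[where 'a=nat, of "a + s"] by simp
  finally show ?case .
qed simp

lemma fact_le_pow_mult_fact:
  assumes "a \<ge> 1"
  shows "fact (a + j - 1) \<le> (a + j) ^ j * (fact (a - 1) :: nat)"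
proof (induction j)
  case (Suc j)
  have "fact (a + Suc j - 1) = (a + j) * fact (a + j - 1)"
    using assms fact_reduce[where 'a=nat, of "a + j"] by simp
  also have "\<dots> \<le> (a + j) * ((a + j) ^ j * fact (a - 1))" using Suc by simp
  also have "\<dots> \<le> (a + Suc j) * ((a + Suc j) ^ j * fact (a - 1))"
    by (intro mult_mono power_mono) auto
  also have "\<dots> = (a + Suc j) ^ Suc j * fact (a - 1)" by (simp only: power_Suc mult.assoc)
  finally show ?case .
qed simp

lemma pow_mult_fact_le_pow_self_mult_fact:
  assumes "p \<ge> 1" "t \<ge> 1"
  shows "p ^ t * fact (p - 1) \<le> p ^ p * (fact (t - 1) :: nat)"
proof (cases "p \<le> t")
  case True
  then obtain j where t: "t = p + j" using le_Suc_ex by blast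
  have "p ^ t * fact (p - 1) = p ^ p * (p ^ j * fact (p - 1))" by (simp add: t power_add)
  also have "\<dots> \<le> p ^ p * fact (p + j - 1)" using pow_mult_fact_le_fact[OF assms(1)] by simp
  finally show ?thesis by (simp add: t)
next
  case False
  then obtain j where p: "p = t + j" by (metis le_Suc_ex nat_le_linear)
  have "p ^ t * fact (p - 1) \<le> p ^ t * (p ^ j * fact (t - 1))"
    using fact_le_pow_mult_fact[OF assms(2), of j] by (simp add: p)
  also have "\<dots> = p ^ p * fact (t - 1)" by (simp add: p power_add)
  finally show ?thesis .
qed

lemma exp_1_mult_pow_le_Suc_pow:
  assumes "(k::nat) \<ge> 1"
  shows "exp 1 * real k ^ (k + 1) \<le> real (k + 1) ^ (k + 1)"
proof -
  have "ln (real k / real (k + 1)) \<le> real k / real (k + 1) - 1"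
    using assms by (intro ln_le_minus_one) auto
  also have "\<dots> = - 1 / real (k + 1)" by (simp add: field_simps)
  finally have "1 \<le> real (k + 1) * (ln (real (k + 1)) - ln (real k))"
    using assms by (simp add: ln_div field_simps)
  hence "exp 1 \<le> exp (real (k + 1) * ln (real (k + 1)) - real (k + 1) * ln (real k))"
    by (simp add: algebra_simps)
  also have "\<dots> = real (k + 1) ^ (k + 1) / real k ^ (k + 1)"
    using assms by (simp only: exp_diff exp_of_nat_mult exp_ln of_nat_0_less_iff)
  finally show ?thesis using assms by (simp add: pos_le_divide_eq)
qed

lemma fact_quotient_le:
  assumes "p \<ge> 1"
  shows "fact (p + j - 1) / fact (p - 1) \<le> real (p + j) ^ (p + j) * exp (- real j) / real p ^ p"
proof (induction j)
  case (Suc j)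
  define q where "q = p + j"
  have q: "q \<ge> 1" using assms by (simp add: q_def)
  have "fact (p + Suc j - 1) / fact (p - 1) = real q * (fact (q - 1) / fact (p - 1))"
    using assms fact_reduce[of "p + j"] by (simp add: q_def)
  also have "\<dots> \<le> real q * (real q ^ q * exp (- real j) / real p ^ p)"
    using Suc by (intro mult_left_mono) (auto simp: q_def)
  also have "\<dots> = (exp 1 * real q ^ (q + 1)) * exp (- real (Suc j)) / real p ^ p"
    by (simp add: mult_ac flip: exp_add)
  also have "\<dots> \<le> real (q + 1) ^ (q + 1) * exp (- real (Suc j)) / real p ^ p"
    using exp_1_mult_pow_le_Suc_pow[OF q] by (intro divide_right_mono mult_right_mono) auto
  finally show ?case by (simp add: q_def)
qed (use assms in simp)

lemma choose_mult_pow_mult_pow_le: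
  assumes "p \<le> m"
  shows "(m choose p) * p ^ p * (m - p) ^ (m - p) \<le> (m::nat) ^ m"
proof -
  have "m ^ m = (p + (m - p)) ^ m" using assms by simp
  also have "\<dots> = (\<Sum>i\<le>m. (m choose i) * p ^ i * (m - p) ^ (m - i))"
    by (simp add: binomial_ring)
  also have "\<dots> \<ge> (m choose p) * p ^ p * (m - p) ^ (m - p)"
    by (rule member_le_sum[where f = "\<lambda>i. (m choose i) * p ^ i * (m - p) ^ (m - i)"])
       (use assms in auto)
  finally show ?thesis .
qed

lemma real_choose_le_pow_divide:
  assumes "p \<le> m"
  shows "real (m choose p) \<le> real m ^ m / (real p ^ p * real (m - p) ^ (m - p))"
proof (cases "p = 0 \<or> p = m")
  case False
  have "real (m choose p) * (real p ^ p * real (m - p) ^ (m - p)) \<le> real m ^ m"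
    using choose_mult_pow_mult_pow_le[OF assms]
    by (metis mult.assoc of_nat_le_iff of_nat_mult of_nat_power)
  thus ?thesis using False assms by (simp add: pos_le_divide_eq)
qed auto

lemma ln_le_divide_exp_1:
  assumes "0 < (z::real)"
  shows "ln z \<le> z / exp 1"
  using ln_le_minus_one[of "z / exp 1"] assms by (simp add: ln_div)

lemma exp_1_gt_8_div_3: "exp 1 > (8/3::real)"
proof -
  have "exp 1 > (1 + 1/30) powr (30::real)" by (rule exp_1_gt_powr) simp
  moreover have "(1 + 1/30) powr (30::real) = (31/30::real) ^ 30" by (simp add: powr_realpow)
  ultimately show ?thesis by (simp add: power_divide)
qed

lemma half_mult_exp_neg_le:
  assumes "(\<delta>::real) > 0"
  shows "x / 2 * exp (- \<delta> * x) \<le> 1 / \<delta> * exp (- (\<delta> / 2) * x)"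
proof -
  have "\<delta> * x \<le> 2 * exp (\<delta> * x / 2)" using exp_ge_add_one_self[of "\<delta> * x / 2"] by linarith
  hence "x / 2 \<le> exp (\<delta> * x / 2) / \<delta>" using assms by (simp add: field_simps)
  hence "x / 2 * exp (- \<delta> * x) \<le> exp (\<delta> * x / 2) / \<delta> * exp (- \<delta> * x)"
    by (rule mult_right_mono) simp
  also have "\<dots> = 1 / \<delta> * exp (- (\<delta> / 2) * x)" by (simp flip: exp_add)
  finally show ?thesis .
qed

lemma entropy_difference_le:
  assumes "0 < y" "y < (1::real)"
  shows "(1 - y) * ln (1 - y) - y * ln y \<le> (1 - y) / exp 1"
proof -
  have "(1 - y) * ln (1 - y) \<le> (1 - y) * (- y)"
    using ln_le_minus_one[of "1 - y"] assms by (intro mult_left_mono) auto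
  hence first: "(1 - y) * ln (1 - y) \<le> y * y - y" by (simp add: algebra_simps)
  have "y * ln (1 / y) \<le> y * ((1 / y) / exp 1)"
    using ln_le_divide_exp_1[of "1 / y"] assms by (intro mult_left_mono) auto
  hence second_e: "- y * ln y \<le> 1 / exp 1" using assms by (simp add: ln_div)
  have "y * ln (1 / y) \<le> y * (1 / y - 1)"
    using ln_le_minus_one[of "1 / y"] assms by (intro mult_left_mono) auto
  hence second_1: "- y * ln y \<le> 1 - y" using assms by (simp add: ln_div algebra_simps)
  show ?thesis
  proof (cases "y \<le> 1 - 1 / exp 1")
    case True
    have "y * (y - 1 + 1 / exp 1) \<le> 0" using True assms by (intro mult_nonneg_nonpos) auto
    hence "1 / exp 1 + (y * y - y) \<le> (1 - y) / exp 1"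
      by (simp add: algebra_simps diff_divide_distrib)
    thus ?thesis using first second_e by linarith
  next
    case False
    hence "(1 - y) * (1 - y) \<le> (1 - y) * (1 / exp 1)" using assms by (intro mult_left_mono) auto
    hence "(1 - y) + (y * y - y) \<le> (1 - y) / exp 1" by (simp add: algebra_simps)
    thus ?thesis using first second_1 by linarith
  qed
qed

lemma choose_mult_ratio_pow_le:
  assumes "1 \<le> m" "m \<le> (n::nat)"
  shows "real (n choose m) * (real m / real n) ^ (2 * m) \<le> exp (real m / exp 1)"
proof (cases "m = n")
  case False
  define d where "d = n - m"
  define y where "y = real d / real n"
  have d: "d \<ge> 1" "n = m + d" using False assms by (auto simp: d_def)
  have pos: "real m > 0" "real d > 0" "real n > 0" using d assms by auto
  have y: "0 < y" "y < 1" "1 - y = real m / real n" using pos d by (auto simp: y_def field_simps)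
  define Z where "Z = real n ^ n / (real m ^ m * real d ^ d) * (real m / real n) ^ (2 * m)"
  have "real (n choose m) * (real m / real n) ^ (2 * m) \<le> Z"
    unfolding Z_def using real_choose_le_pow_divide[of m n] assms
    by (intro mult_right_mono) (auto simp: d_def)
  moreover have "Z > 0" unfolding Z_def using pos by simp
  moreover have "ln Z \<le> real m / exp 1"
  proof -
    have "ln Z = real n * ln (real n) - real m * ln (real m) - real d * ln (real d)
                 + 2 * real m * (ln (real m) - ln (real n))"
      unfolding Z_def using pos by (simp add: ln_mult ln_div ln_realpow)
    also have "\<dots> = real m * (ln (real m) - ln (real n)) - real d * (ln (real d) - ln (real n))"
      using d by (simp add: algebra_simps)
    also have "\<dots> = real n * ((1 - y) * ln (1 - y) - y * ln y)"
      unfolding y(3) using pos by (simp add: y_def ln_div algebra_simps)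
    also have "\<dots> \<le> real n * ((1 - y) / exp 1)"
      using pos y by (intro mult_left_mono entropy_difference_le) auto
    also have "\<dots> = real m / exp 1" unfolding y(3) using pos by simp
    finally show ?thesis .
  qed
  ultimately show ?thesis by (metis exp_ln exp_le_cancel_iff order_trans)
qed (use assms in simp)

lemma choose_mult_ratio_pow_mult_exp_le:
  assumes "1 \<le> p" "2 * p \<le> m"
  shows "real (m choose p) * (real (m - p) / real m) ^ (2 * m) * exp (4 * real p - 2 * real m)
         \<le> exp (real m / exp 1 - 3 * real m / 4)"
proof -
  define q where "q = m - p"
  have q: "q \<ge> 1" "m = p + q" "p \<le> q" using assms by (auto simp: q_def)
  have pos: "real p > 0" "real q > 0" "real m > 0" using q assms by auto
  define Z where "Z = real m ^ m / (real p ^ p * real q ^ q) * (real q / real m) ^ (2 * m)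
                      * exp (4 * real p - 2 * real m)"
  have le_Z: "real (m choose p) * (real q / real m) ^ (2 * m) * exp (4 * real p - 2 * real m) \<le> Z"
    unfolding Z_def q_def using real_choose_le_pow_divide[of p m] assms
    by (intro mult_right_mono) auto
  have "ln Z \<le> real m / exp 1 - 3 * real m / 4"
  proof -
    have "ln (real q) - ln (real m) \<le> real q / real m - 1"
      using ln_le_minus_one[of "real q / real m"] pos by (simp add: ln_div)
    also have "\<dots> = - real p / real m" using pos q by (simp add: field_simps)
    finally have "(real m + real p) * (ln (real q) - ln (real m))
                  \<le> (real m + real p) * (- real p / real m)"
      using pos by (intro mult_left_mono) auto
    hence ln_q: "(real m + real p) * (ln (real q) - ln (real m)) \<le> - ((real m + real p) * real p / real m)"
      by simp
    have "real p * (ln (real m) - ln (real p)) \<le> real p * ((real m / real p) / exp 1)"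
      using ln_le_divide_exp_1[of "real m / real p"] pos by (intro mult_left_mono) (auto simp: ln_div)
    hence ln_p: "real p * (ln (real m) - ln (real p)) \<le> real m / exp 1" using pos by simp
    have "0 \<le> (real m - 2 * real p) * (5 * real m - 2 * real p)"
      using assms by (intro mult_nonneg_nonneg) auto
    hence "(4 * real p - 5 * real m / 4) * real m \<le> (real m + real p) * real p"
      by (simp add: algebra_simps)
    hence quad: "4 * real p - 5 * real m / 4 \<le> (real m + real p) * real p / real m"
      using pos by (simp add: pos_le_divide_eq)
    have "ln Z = real m * ln (real m) - real p * ln (real p) - real q * ln (real q)
                 + 2 * real m * (ln (real q) - ln (real m)) + (4 * real p - 2 * real m)"
      unfolding Z_def using pos by (simp add: ln_mult ln_div ln_realpow)
    also have "\<dots> = (real m + real p) * (ln (real q) - ln (real m))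
                   + real p * (ln (real m) - ln (real p)) + 4 * real p - 2 * real m"
      using q by (simp add: algebra_simps)
    finally show ?thesis using ln_q ln_p quad by linarith
  qed
  moreover have "Z > 0" unfolding Z_def using pos by simp
  ultimately have "Z \<le> exp (real m / exp 1 - 3 * real m / 4)"
    by (metis exp_ln exp_le_cancel_iff)
  thus ?thesis using le_Z unfolding q_def by linarith
qed

text \<open>\<open>cycle_weight n m p ^ 2\<close> bounds the probability that a fixed set of \<open>m\<close> states, with a fixed
  smallest part of \<open>p\<close> states, forms a periodic class; the square comes from using just two of
  the \<open>r \<ge> 2\<close> letters.\<close>
definition cycle_weight :: "nat \<Rightarrow> nat \<Rightarrow> nat \<Rightarrow> real" where
  "cycle_weight n m p = real (m - p) ^ m * exp (real p - real (m - p)) / real n ^ m"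

lemma choose_choose_cycle_weight_le:
  assumes "1 \<le> p" "2 * p \<le> m" "m \<le> n"
  shows "real (n choose m) * real (m choose p) * cycle_weight n m p ^ 2
         \<le> exp (- (3/4 - 2 / exp 1) * real m)"
proof -
  have pos: "real m > 0" "real n > 0" using assms by auto
  have "exp (real p - real (m - p)) ^ 2 = exp (4 * real p - 2 * real m)"
    using assms by (simp add: of_nat_diff flip: exp_of_nat_mult)
  moreover have "real (m - p) / real n = (real m / real n) * (real (m - p) / real m)"
    using pos by simp
  ultimately have "cycle_weight n m p ^ 2
      = (real m / real n) ^ (2 * m) * ((real (m - p) / real m) ^ (2 * m) * exp (4 * real p - 2 * real m))"
    unfolding cycle_weight_def by (auto simp: power_mult_distrib power_divide power_mult mult_ac)
  hence "real (n choose m) * real (m choose p) * cycle_weight n m p ^ 2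
      = (real (n choose m) * (real m / real n) ^ (2 * m)) *
        (real (m choose p) * (real (m - p) / real m) ^ (2 * m) * exp (4 * real p - 2 * real m))"
    by (simp add: mult_ac)
  also have "\<dots> \<le> exp (real m / exp 1) * exp (real m / exp 1 - 3 * real m / 4)"
    using choose_mult_ratio_pow_le[of m n] choose_mult_ratio_pow_mult_exp_le[of p m] assms
    by (intro mult_mono) auto
  also have "\<dots> = exp (- (3/4 - 2 / exp 1) * real m)"
    by (simp flip: exp_add add: algebra_simps)
  finally show ?thesis .
qed

section \<open>Counting layered transition functions\<close>

definition transitions :: "nat \<Rightarrow> nat \<Rightarrow> nat set \<Rightarrow> (nat \<times> nat \<Rightarrow> nat) set" where
  "transitions n r X = PiE (X \<times> {..<r}) (\<lambda>_. {..<n})"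

lemma transitions_Un: "transitions n r (A \<union> R) = PiE (A \<times> {..<r} \<union> R \<times> {..<r}) (\<lambda>_. {..<n})"
  unfolding transitions_def by (simp add: Sigma_Un_distrib1)

lemma finite_transitions: "finite X \<Longrightarrow> finite (transitions n r X)"
  unfolding transitions_def by (intro finite_PiE) auto

text \<open>A \<open>k\<close>-periodic class with parts \<open>P\<^sub>0, \<dots>, P\<^sub>k\<^sub>-\<^sub>1\<close> satisfies \<open>cyclic_layers r P\<^sub>0 (k - 1) P\<^sub>0 (P\<^sub>1 \<union> \<dots> \<union> P\<^sub>k\<^sub>-\<^sub>1)\<close>.\<close>
fun cyclic_layers ::
  "nat \<Rightarrow> nat set \<Rightarrow> nat \<Rightarrow> nat set \<Rightarrow> nat set \<Rightarrow> (nat \<times> nat \<Rightarrow> nat) \<Rightarrow> bool" where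
  "cyclic_layers r A0 0 A R g \<longleftrightarrow> R = {} \<and> tau_one r g A \<subseteq> A0"
| "cyclic_layers r A0 (Suc L) A R g \<longleftrightarrow> tau_one r g A \<noteq> {} \<and> tau_one r g A \<subseteq> R \<and>
     cyclic_layers r A0 L (tau_one r g A) (R - tau_one r g A) g"

lemma tau_one_cong:
  assumes "\<forall>x\<in>A \<times> {..<r}. g x = g' x"
  shows "tau_one r g A = tau_one r g' A"
  using assms unfolding tau_one_def by force

lemma tau_one_memI: "q \<in> A \<Longrightarrow> a < r \<Longrightarrow> g (q, a) \<in> tau_one r g A"
  unfolding tau_one_def by auto

lemma cyclic_layers_cong:
  "\<forall>x\<in>(A \<union> R) \<times> {..<r}. g x = g' x \<Longrightarrow> cyclic_layers r A0 L A R g = cyclic_layers r A0 L A R g'"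
proof (induction L arbitrary: A R)
  case 0
  have "tau_one r g A = tau_one r g' A" using 0 by (intro tau_one_cong) auto
  then show ?case by simp
next
  case (Suc L)
  let ?B = "tau_one r g A"
  have B: "?B = tau_one r g' A" using Suc.prems by (intro tau_one_cong) auto
  show ?case
  proof (cases "?B \<subseteq> R")
    case True
    have "\<forall>x\<in>(?B \<union> (R - ?B)) \<times> {..<r}. g x = g' x" using Suc.prems True by auto
    hence "cyclic_layers r A0 L ?B (R - ?B) g = cyclic_layers r A0 L ?B (R - ?B) g'" by (rule Suc.IH)
    then show ?thesis using B by simp
  qed (use B in simp)
qed

lemma card_PiE_Un_filter_le:
  assumes fin: "finite I" "finite J" "I \<inter> J = {}" "\<And>x. finite (F x)"
    and P: "\<And>f g. \<forall>x\<in>I. f x = g x \<Longrightarrow> P f = P g"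
    and Q: "\<And>f g. \<forall>x\<in>J. f x = g x \<Longrightarrow> Q f = Q g"
  shows "card {f \<in> PiE (I \<union> J) F. P f \<and> Q f} \<le> card {f \<in> PiE I F. P f} * card {f \<in> PiE J F. Q f}"
proof -
  let ?S = "{f \<in> PiE (I \<union> J) F. P f \<and> Q f}"
  let ?T = "{f \<in> PiE I F. P f} \<times> {f \<in> PiE J F. Q f}"
  let ?h = "\<lambda>f. (restrict f I, restrict f J)"
  have "inj_on ?h ?S"
  proof (rule inj_onI, rule ext)
    fix f g x assume f: "f \<in> ?S" and g: "g \<in> ?S" and eq: "?h f = ?h g"
    show "f x = g x"
    proof (cases "x \<in> I \<union> J")
      case True
      then show ?thesis using eq by (auto dest!: fun_cong[where x = x] simp: restrict_def split: if_splits)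
    next
      case False
      then show ?thesis using f g by (auto simp: PiE_def extensional_def)
    qed
  qed
  moreover have "?h ` ?S \<subseteq> ?T"
  proof
    fix y assume "y \<in> ?h ` ?S"
    then obtain f where f: "f \<in> ?S" and y: "y = ?h f" by blast
    have "restrict f I \<in> PiE I F" "restrict f J \<in> PiE J F" using f by (auto simp: PiE_def Pi_def)
    moreover have "P (restrict f I)" "Q (restrict f J)"
      using f P[of "restrict f I" f] Q[of "restrict f J" f] by auto
    ultimately show "y \<in> ?T" using y by auto
  qed
  moreover have "finite (PiE I F)" "finite (PiE J F)" using fin by (auto intro!: finite_PiE)
  hence "finite ?T" by simp
  ultimately have "card ?S \<le> card ?T" by (rule card_inj_on_le)
  thus ?thesis by (simp add: card_cartesian_product)
qed

lemma card_tau_one_subset_le: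
  assumes "finite A" "finite B"
  shows "card {g \<in> transitions n r A. tau_one r g A \<subseteq> B} \<le> card B ^ (r * card A)"
proof -
  have "{g \<in> transitions n r A. tau_one r g A \<subseteq> B} \<subseteq> PiE (A \<times> {..<r}) (\<lambda>_. B \<inter> {..<n})"
  proof
    fix g assume "g \<in> {g \<in> transitions n r A. tau_one r g A \<subseteq> B}"
    hence "g \<in> PiE (A \<times> {..<r}) (\<lambda>_. {..<n})" "\<forall>x\<in>A \<times> {..<r}. g x \<in> B"
      using tau_one_memI[of _ A _ r g] unfolding transitions_def by auto
    thus "g \<in> PiE (A \<times> {..<r}) (\<lambda>_. B \<inter> {..<n})" by (auto simp: PiE_iff)
  qed
  hence "card {g \<in> transitions n r A. tau_one r g A \<subseteq> B}
           \<le> card (PiE (A \<times> {..<r}) (\<lambda>_. B \<inter> {..<n}))"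
    using assms by (intro card_mono finite_PiE) auto
  also have "\<dots> = card (B \<inter> {..<n}) ^ (card A * r)"
    using assms by (simp add: card_PiE card_cartesian_product)
  also have "\<dots> \<le> card B ^ (r * card A)"
    using assms by (simp add: mult.commute card_mono power_mono)
  finally show ?thesis .
qed

text \<open>For one letter, \<open>chain_bound p a \<rho>\<close> bounds the choices along a layered chain starting
  from \<open>a\<close> states with \<open>\<rho>\<close> states left to cover and \<open>p\<close> possible targets at the end:
  \<open>\<rho>\<^sup>a\<close> for the first step, then \<open>layer_bound p \<rho>\<close> absorbs all remaining layer sizes.\<close>
definition layer_bound :: "nat \<Rightarrow> nat \<Rightarrow> real" where
  "layer_bound p \<rho> = fact (\<rho> - 1) * real p ^ p / fact (p - 1)"

definition chain_bound :: "nat \<Rightarrow> nat \<Rightarrow> nat \<Rightarrow> real" where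
  "chain_bound p a \<rho> = (if \<rho> = 0 then real p ^ a else real \<rho> ^ a * layer_bound p \<rho>)"

lemma layer_bound_nonneg: "layer_bound p \<rho> \<ge> 0"
  unfolding layer_bound_def by simp

lemma chain_bound_nonneg: "chain_bound p a \<rho> \<ge> 0"
  unfolding chain_bound_def using layer_bound_nonneg by simp

lemma chain_bound_le_layer_bound:
  assumes "1 \<le> p" "1 \<le> s" "s \<le> \<rho>"
  shows "chain_bound p s (\<rho> - s) \<le> layer_bound p \<rho>"
proof (cases "s = \<rho>")
  case True
  have "p ^ s * fact (p - 1) \<le> p ^ p * (fact (s - 1) :: nat)"
    using pow_mult_fact_le_pow_self_mult_fact[of p s] assms by simp
  hence "real (p ^ s * fact (p - 1)) \<le> real (p ^ p * fact (s - 1))" by (simp only: of_nat_le_iff)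
  hence "real p ^ s * fact (p - 1) \<le> fact (s - 1) * real p ^ p" by (simp add: of_nat_fact mult.commute)
  hence "real p ^ s \<le> layer_bound p s"
    unfolding layer_bound_def by (simp add: pos_le_divide_eq)
  thus ?thesis using True by (simp add: chain_bound_def)
next
  case False
  hence "(\<rho> - s) ^ s * fact (\<rho> - s - 1) \<le> (fact (\<rho> - 1) :: nat)"
    using pow_mult_fact_le_fact[of "\<rho> - s" s] assms by simp
  hence "real ((\<rho> - s) ^ s * fact (\<rho> - s - 1)) \<le> real (fact (\<rho> - 1) :: nat)"
    by (simp only: of_nat_le_iff)
  hence "real (\<rho> - s) ^ s * fact (\<rho> - s - 1) \<le> fact (\<rho> - 1)" by (simp add: of_nat_fact)
  hence "real (\<rho> - s) ^ s * fact (\<rho> - s - 1) * (real p ^ p / fact (p - 1))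
           \<le> fact (\<rho> - 1) * (real p ^ p / fact (p - 1))"
    by (intro mult_right_mono) auto
  thus ?thesis using False assms unfolding chain_bound_def layer_bound_def by (simp add: mult_ac)
qed

lemma sum_card_tau_one_eq_le:
  assumes "finite A" "finite R"
  shows "(\<Sum>B\<in>{B. B \<subseteq> R \<and> B \<noteq> {}}. card {g \<in> transitions n r A. tau_one r g A = B})
           \<le> card R ^ (r * card A)"
proof -
  let ?T = "\<lambda>B. {g \<in> transitions n r A. tau_one r g A = B}"
  have "finite {B. B \<subseteq> R \<and> B \<noteq> {}}" using assms by simp
  moreover have "\<forall>B. finite (?T B)" using finite_transitions[OF assms(1)] by simp
  ultimately have "(\<Sum>B\<in>{B. B \<subseteq> R \<and> B \<noteq> {}}. card (?T B)) = card (\<Union>B\<in>{B. B \<subseteq> R \<and> B \<noteq> {}}. ?T B)"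
    by (intro card_UN_disjoint[symmetric]) auto
  also have "\<dots> \<le> card {g \<in> transitions n r A. tau_one r g A \<subseteq> R}"
    using finite_transitions[OF assms(1)] by (intro card_mono) auto
  also have "\<dots> \<le> card R ^ (r * card A)" using assms by (rule card_tau_one_subset_le)
  finally show ?thesis .
qed

lemma card_cyclic_layers_Suc_le:
  assumes "finite A" "finite R"
  shows "card {g \<in> transitions n r (A \<union> R). cyclic_layers r A0 (Suc L) A R g}
    \<le> (\<Sum>B\<in>{B. B \<subseteq> R \<and> B \<noteq> {}}.
          card {g \<in> transitions n r (A \<union> R). tau_one r g A = B \<and> cyclic_layers r A0 L B (R - B) g})"
proof -
  let ?S = "\<lambda>B. {g \<in> transitions n r (A \<union> R). tau_one r g A = B \<and> cyclic_layers r A0 L B (R - B) g}"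
  have "{g \<in> transitions n r (A \<union> R). cyclic_layers r A0 (Suc L) A R g}
          \<subseteq> (\<Union>B\<in>{B. B \<subseteq> R \<and> B \<noteq> {}}. ?S B)"
    by auto
  moreover have "finite (\<Union>B\<in>{B. B \<subseteq> R \<and> B \<noteq> {}}. ?S B)"
    by (rule finite_subset[of _ "transitions n r (A \<union> R)"]) (auto simp: finite_transitions assms)
  ultimately have "card {g \<in> transitions n r (A \<union> R). cyclic_layers r A0 (Suc L) A R g}
                     \<le> card (\<Union>B\<in>{B. B \<subseteq> R \<and> B \<noteq> {}}. ?S B)"
    by (simp add: card_mono)
  also have "\<dots> \<le> (\<Sum>B\<in>{B. B \<subseteq> R \<and> B \<noteq> {}}. card (?S B))"
    using assms by (intro card_UN_le) simp
  finally show ?thesis .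
qed

lemma card_tau_one_eq_cyclic_layers_le:
  assumes "finite A" "finite R" "A \<inter> R = {}" "B \<subseteq> R"
  shows "card {g \<in> transitions n r (A \<union> R). tau_one r g A = B \<and> cyclic_layers r A0 L B (R - B) g}
    \<le> card {g \<in> transitions n r A. tau_one r g A = B}
        * card {g \<in> transitions n r R. cyclic_layers r A0 L B (R - B) g}"
  unfolding transitions_Un unfolding transitions_def
proof (rule card_PiE_Un_filter_le)
  show "tau_one r f A = B \<longleftrightarrow> tau_one r g A = B" if "\<forall>x\<in>A \<times> {..<r}. f x = g x" for f g
    using tau_one_cong[OF that] by simp
  show "cyclic_layers r A0 L B (R - B) f = cyclic_layers r A0 L B (R - B) g"
    if "\<forall>x\<in>R \<times> {..<r}. f x = g x" for f g
    using that assms(4) by (intro cyclic_layers_cong) (simp add: Un_absorb1)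
qed (use assms in auto)

text \<open>Choosing the image \<open>B\<close> of the current layer splits the transitions on \<open>A \<union> R\<close> into
  independent parts on \<open>A\<close> (with image exactly \<open>B\<close>) and on \<open>R\<close> (a chain starting from \<open>B\<close>).\<close>
lemma card_cyclic_layers_le:
  assumes A0: "finite A0" "card A0 = p" "1 \<le> p"
  shows "finite A \<Longrightarrow> finite R \<Longrightarrow> A \<inter> R = {} \<Longrightarrow>
    real (card {g \<in> transitions n r (A \<union> R). cyclic_layers r A0 L A R g})
      \<le> chain_bound p (card A) (card R) ^ r"
proof (induction L arbitrary: A R)
  case 0
  show ?case
  proof (cases "R = {}")
    case True
    have "{g \<in> transitions n r (A \<union> R). cyclic_layers r A0 0 A R g}
            = {g \<in> transitions n r A. tau_one r g A \<subseteq> A0}"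
      using True by simp
    hence "card {g \<in> transitions n r (A \<union> R). cyclic_layers r A0 0 A R g} \<le> p ^ (r * card A)"
      using card_tau_one_subset_le[of A A0 n r] 0 A0 by simp
    hence "real (card {g \<in> transitions n r (A \<union> R). cyclic_layers r A0 0 A R g})
                    \<le> real p ^ (card A * r)"
      by (simp add: mult.commute flip: of_nat_le_iff)
    thus ?thesis using True by (simp add: chain_bound_def power_mult)
  qed (simp add: chain_bound_nonneg)
next
  case (Suc L)
  show ?case
  proof (cases "R = {}")
    case True
    hence none: "{g \<in> transitions n r (A \<union> R). cyclic_layers r A0 (Suc L) A R g} = {}" by auto
    show ?thesis unfolding none by (simp add: chain_bound_nonneg)
  next
    case False
    define I where "I = {B. B \<subseteq> R \<and> B \<noteq> {}}"
    define T1 where "T1 B = real (card {g \<in> transitions n r A. tau_one r g A = B})" for B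
    have T2: "real (card {g \<in> transitions n r R. cyclic_layers r A0 L B (R - B) g})
                \<le> layer_bound p (card R) ^ r" if "B \<in> I" for B
    proof -
      have B: "B \<union> (R - B) = R" "B \<subseteq> R" "B \<noteq> {}" "finite B"
        using that Suc.prems finite_subset by (auto simp: I_def)
      hence "real (card {g \<in> transitions n r R. cyclic_layers r A0 L B (R - B) g})
               \<le> chain_bound p (card B) (card (R - B)) ^ r"
        using Suc.IH[of B "R - B"] Suc.prems by auto
      also have "\<dots> \<le> layer_bound p (card R) ^ r"
        using A0 B Suc.prems chain_bound_nonneg
        by (auto simp: card_Diff_subset card_mono card_gt_0_iff Suc_le_eq
                 intro!: power_mono chain_bound_le_layer_bound)
      finally show ?thesis .
    qed
    have "real (card {g \<in> transitions n r (A \<union> R). cyclic_layers r A0 (Suc L) A R g})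
            \<le> (\<Sum>B\<in>I. real (card
                  {g \<in> transitions n r (A \<union> R). tau_one r g A = B \<and> cyclic_layers r A0 L B (R - B) g}))"
      unfolding I_def of_nat_sum[symmetric] of_nat_le_iff
      by (rule card_cyclic_layers_Suc_le) (use Suc.prems in auto)
    also have "\<dots> \<le> (\<Sum>B\<in>I. T1 B * layer_bound p (card R) ^ r)"
    proof (rule sum_mono)
      fix B assume "B \<in> I"
      hence "real (card {g \<in> transitions n r (A \<union> R). tau_one r g A = B \<and> cyclic_layers r A0 L B (R - B) g})
               \<le> T1 B * real (card {g \<in> transitions n r R. cyclic_layers r A0 L B (R - B) g})"
        unfolding T1_def of_nat_mult[symmetric] of_nat_le_iff
        using Suc.prems by (intro card_tau_one_eq_cyclic_layers_le) (auto simp: I_def)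
      also have "\<dots> \<le> T1 B * layer_bound p (card R) ^ r"
        using T2[OF \<open>B \<in> I\<close>] by (intro mult_left_mono) (auto simp: T1_def)
      finally show "real (card {g \<in> transitions n r (A \<union> R). tau_one r g A = B
                      \<and> cyclic_layers r A0 L B (R - B) g}) \<le> T1 B * layer_bound p (card R) ^ r" .
    qed
    also have "\<dots> \<le> real (card R ^ (r * card A)) * layer_bound p (card R) ^ r"
      unfolding sum_distrib_right[symmetric]
    proof (rule mult_right_mono)
      show "(\<Sum>B\<in>I. T1 B) \<le> real (card R ^ (r * card A))"
        unfolding I_def T1_def of_nat_sum[symmetric] of_nat_le_iff
        by (rule sum_card_tau_one_eq_le) (use Suc.prems in auto)
    qed (simp add: layer_bound_nonneg)
    also have "\<dots> = chain_bound p (card A) (card R) ^ r"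
      using False Suc.prems
      by (simp add: chain_bound_def power_mult_distrib flip: power_mult) (simp add: mult.commute)
    finally show ?thesis .
  qed
qed

section \<open>Periodic classes\<close>

lemma periodic_class_subset_states: "periodic_class k n r \<tau> C \<Longrightarrow> C \<subseteq> {..<n}"
  unfolding periodic_class_def closed_comm_class_def comm_class_def by auto

lemma cyclic_partition_cyclic_layers:
  assumes k: "k > 1"
    and ne: "\<And>i. i < k \<Longrightarrow> Q i \<noteq> {}"
    and disj: "\<And>i j. i < k \<Longrightarrow> j < k \<Longrightarrow> i \<noteq> j \<Longrightarrow> Q i \<inter> Q j = {}"
    and step: "\<And>i. i < k \<Longrightarrow> tau_one r \<tau> (Q i) = Q ((i + 1) mod k)"
  shows "cyclic_layers r (Q 0) (k - 1) (Q 0) (\<Union>i\<in>{0<..<k}. Q i) \<tau>"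
proof -
  have "cyclic_layers r (Q 0) L (Q j) (\<Union>i\<in>{j<..<k}. Q i) \<tau>" if "j + L = k - 1" for j L
    using that
  proof (induction L arbitrary: j)
    case 0
    hence "{j<..<k} = {}" "(j + 1) mod k = 0" using k by auto
    then show ?case using step[of j] 0 k by simp
  next
    case (Suc L)
    hence j: "j + 1 < k" by simp
    have "(\<Union>i\<in>{j<..<k}. Q i) - Q (j + 1) = (\<Union>i\<in>{j + 1<..<k}. Q i)"
    proof (intro equalityI subsetI)
      fix x assume "x \<in> (\<Union>i\<in>{j<..<k}. Q i) - Q (j + 1)"
      then obtain i where "i \<in> {j<..<k}" "x \<in> Q i" "x \<notin> Q (j + 1)" by auto
      moreover from this have "i \<noteq> j + 1" by auto
      ultimately show "x \<in> (\<Union>i\<in>{j + 1<..<k}. Q i)" by auto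
    next
      fix x assume "x \<in> (\<Union>i\<in>{j + 1<..<k}. Q i)"
      then obtain i where i: "i \<in> {j + 1<..<k}" "x \<in> Q i" by auto
      have "Q i \<inter> Q (j + 1) = {}" using i j by (intro disj) auto
      thus "x \<in> (\<Union>i\<in>{j<..<k}. Q i) - Q (j + 1)" using i by auto
    qed
    moreover have "Q (j + 1) \<noteq> {}" "Q (j + 1) \<subseteq> (\<Union>i\<in>{j<..<k}. Q i)" using ne j by auto
    moreover have "cyclic_layers r (Q 0) L (Q (j + 1)) (\<Union>i\<in>{j + 1<..<k}. Q i) \<tau>"
      using Suc by simp
    ultimately show ?case using step[of j] j by simp
  qed
  from this[of 0 "k - 1"] show ?thesis by simp
qed

lemma periodic_class_smallest_part_first:
  assumes "periodic_class k n r \<tau> C"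
  obtains Q where "\<And>i. i < k \<Longrightarrow> Q i \<noteq> {}"
    and "\<And>i j. i < k \<Longrightarrow> j < k \<Longrightarrow> i \<noteq> j \<Longrightarrow> Q i \<inter> Q j = {}"
    and "(\<Union>i<k. Q i) = C"
    and "\<And>i. i < k \<Longrightarrow> tau_one r \<tau> (Q i) = Q ((i + 1) mod k)"
    and "\<And>i. i < k \<Longrightarrow> card (Q 0) \<le> card (Q i)"
proof -
  from assms have k: "k > 1" unfolding periodic_class_def by auto
  from assms obtain P :: "nat \<Rightarrow> nat set" where
    ne: "\<forall>i<k. P i \<noteq> {}" and disj: "\<forall>i<k. \<forall>j<k. i \<noteq> j \<longrightarrow> P i \<inter> P j = {}"
    and un: "(\<Union>i<k. P i) = C" and step: "\<forall>i<k. tau_one r \<tau> (P i) = P ((i + 1) mod k)"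
    unfolding periodic_class_def by blast
  obtain i0 where i0: "i0 < k" "\<And>i. i < k \<Longrightarrow> card (P i0) \<le> card (P i)"
    using ex_has_least_nat[of "\<lambda>i. i < k" 0 "\<lambda>i. card (P i)"] k by auto
  define Q where "Q i = P ((i + i0) mod k)" for i
  have unshift: "((i + i0) mod k + (k - i0)) mod k = i" if "i < k" for i
  proof -
    have "((i + i0) mod k + (k - i0)) mod k = (i + i0 + (k - i0)) mod k"
      by (simp add: mod_add_left_eq)
    also have "i + i0 + (k - i0) = i + k" using i0(1) by simp
    finally show ?thesis using that by simp
  qed
  have shift_inj: "(i + i0) mod k \<noteq> (j + i0) mod k" if "i < k" "j < k" "i \<noteq> j" for i j
    using that unshift by metis
  show ?thesis
  proof
    show "Q i \<noteq> {}" "card (Q 0) \<le> card (Q i)" if "i < k" for i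
      unfolding Q_def using ne i0 k by auto
    show "Q i \<inter> Q j = {}" if "i < k" "j < k" "i \<noteq> j" for i j
      unfolding Q_def using disj shift_inj[OF that] k by simp
    show "tau_one r \<tau> (Q i) = Q ((i + 1) mod k)" if "i < k" for i
    proof -
      have "tau_one r \<tau> (Q i) = P (((i + i0) mod k + 1) mod k)" unfolding Q_def using step k by simp
      also have "((i + i0) mod k + 1) mod k = (i + i0 + 1) mod k" by (rule mod_add_left_eq)
      also have "(i + i0 + 1) mod k = ((i + 1) mod k + i0) mod k"
        using mod_add_left_eq[of "i + 1" k i0] by (simp add: add_ac)
      finally show ?thesis unfolding Q_def .
    qed
    have "P i = Q ((i + (k - i0)) mod k)" if "i < k" for i
    proof -
      have "((i + (k - i0)) mod k + i0) mod k = (i + (k - i0) + i0) mod k"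
        by (simp add: mod_add_left_eq)
      also have "i + (k - i0) + i0 = i + k" using i0(1) by simp
      finally show ?thesis unfolding Q_def using that by simp
    qed
    hence "P i \<subseteq> (\<Union>i<k. Q i)" if "i < k" for i using that k by fastforce
    moreover have "Q i \<subseteq> (\<Union>i<k. P i)" for i
    proof -
      have "(i + i0) mod k < k" using k by simp
      thus ?thesis unfolding Q_def by blast
    qed
    ultimately show "(\<Union>i<k. Q i) = C" unfolding un[symmetric] by blast
  qed
qed

lemma periodic_class_cyclic_layers:
  assumes "periodic_class k n r \<tau> C"
  obtains P0 where "P0 \<subseteq> C" "1 \<le> card P0" "2 * card P0 \<le> card C"
    "cyclic_layers r P0 (k - 1) P0 (C - P0) \<tau>"
proof -
  from assms have k: "k > 1" unfolding periodic_class_def by auto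
  have finC: "finite C" using periodic_class_subset_states[OF assms] finite_subset by blast
  obtain Q where ne: "\<And>i. i < k \<Longrightarrow> Q i \<noteq> {}"
    and disj: "\<And>i j. i < k \<Longrightarrow> j < k \<Longrightarrow> i \<noteq> j \<Longrightarrow> Q i \<inter> Q j = {}"
    and un: "(\<Union>i<k. Q i) = C"
    and step: "\<And>i. i < k \<Longrightarrow> tau_one r \<tau> (Q i) = Q ((i + 1) mod k)"
    and smallest: "\<And>i. i < k \<Longrightarrow> card (Q 0) \<le> card (Q i)"
    using periodic_class_smallest_part_first[OF assms] by blast
  have sub: "Q i \<subseteq> C" if "i < k" for i using un that by auto
  have rest: "(\<Union>i\<in>{0<..<k}. Q i) = C - Q 0"
  proof (intro equalityI subsetI)
    fix x assume "x \<in> (\<Union>i\<in>{0<..<k}. Q i)"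
    then obtain i where i: "i \<in> {0<..<k}" "x \<in> Q i" by auto
    have "Q i \<inter> Q 0 = {}" using i by (intro disj) auto
    thus "x \<in> C - Q 0" using i sub by auto
  next
    fix x assume "x \<in> C - Q 0"
    then obtain i where "i < k" "x \<in> Q i" "i \<noteq> 0" using un by auto
    thus "x \<in> (\<Union>i\<in>{0<..<k}. Q i)" by auto
  qed
  have fin: "finite (Q 0)" "finite (Q 1)" using sub[of 0] sub[of 1] k finC finite_subset by auto
  have "card (Q 0) + card (Q 1) = card (Q 0 \<union> Q 1)"
    using disj[of 0 1] k fin by (simp add: card_Un_disjoint)
  also have "\<dots> \<le> card C" using sub k finC by (intro card_mono) auto
  finally have "2 * card (Q 0) \<le> card C" using smallest[of 1] k by simp
  moreover have "1 \<le> card (Q 0)" using ne[of 0] k fin by (simp add: Suc_le_eq card_gt_0_iff)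
  moreover have "cyclic_layers r (Q 0) (k - 1) (Q 0) (C - Q 0) \<tau>"
    using cyclic_partition_cyclic_layers[of k Q r \<tau>, OF k ne disj step] rest by simp
  ultimately show ?thesis using that sub k by auto
qed

lemma periodic_transitions_subset:
  "{\<tau> \<in> transitions n r {..<n}. \<exists>C. periodic_class k n r \<tau> C \<and> card C = m}
     \<subseteq> (\<Union>p\<in>{1..m div 2}. \<Union>C\<in>{C. C \<subseteq> {..<n} \<and> card C = m}. \<Union>P0\<in>{A. A \<subseteq> C \<and> card A = p}.
          {\<tau> \<in> transitions n r {..<n}. cyclic_layers r P0 (k - 1) P0 (C - P0) \<tau>})"
proof clarify
  fix \<tau> C assume \<tau>: "\<tau> \<in> transitions n r {..<n}" and C: "periodic_class k n r \<tau> C" "m = card C"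
  obtain P0 where "P0 \<subseteq> C" "1 \<le> card P0" "2 * card P0 \<le> card C"
    "cyclic_layers r P0 (k - 1) P0 (C - P0) \<tau>"
    using periodic_class_cyclic_layers[OF C(1)] .
  moreover have "C \<subseteq> {..<n}" using C(1) by (rule periodic_class_subset_states)
  ultimately show "\<tau> \<in> (\<Union>p\<in>{1..card C div 2}. \<Union>C'\<in>{C'. C' \<subseteq> {..<n} \<and> card C' = card C}.
      \<Union>P0\<in>{A. A \<subseteq> C' \<and> card A = p}. {\<tau> \<in> transitions n r {..<n}. cyclic_layers r P0 (k - 1) P0 (C' - P0) \<tau>})"
    using \<tau> by (intro UN_I[of "card P0"]) auto
qed

section \<open>The probability bound\<close>

lemma prob_has_periodic_class_eq:
  assumes "n \<ge> 1"
  shows "measure_pmf.prob (random_dfa n r) {D. has_periodic_class n r k m D}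
       = real (card {\<tau> \<in> transitions n r {..<n}. \<exists>C. periodic_class k n r \<tau> C \<and> card C = m})
         / real (card (transitions n r {..<n}))"
proof -
  define Phi where "Phi = PiE {..<n} (\<lambda>_. (UNIV :: bool set))"
  define Ev where "Ev = {\<tau> \<in> transitions n r {..<n}. \<exists>C. periodic_class k n r \<tau> C \<and> card C = m}"
  have space: "dfa_space n r = {..<n} \<times> (transitions n r {..<n} \<times> Phi)"
    unfolding dfa_space_def transitions_def Phi_def by auto
  have event: "dfa_space n r \<inter> {D. has_periodic_class n r k m D} = {..<n} \<times> (Ev \<times> Phi)"
    unfolding space Ev_def by (auto simp: has_periodic_class_def trans_def)
  have Phi: "finite Phi" "Phi \<noteq> {}" unfolding Phi_def by (auto simp: PiE_eq_empty_iff intro: finite_PiE)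
  have states: "{..<n} \<noteq> {}" using assms lessThan_empty_iff by (metis not_one_le_zero)
  hence "transitions n r {..<n} \<noteq> {}" unfolding transitions_def by (auto simp: PiE_eq_empty_iff)
  hence "finite (dfa_space n r)" "dfa_space n r \<noteq> {}"
    unfolding space using Phi states by (auto simp: finite_transitions)
  hence "measure_pmf.prob (random_dfa n r) {D. has_periodic_class n r k m D}
      = real (card ({..<n} \<times> (Ev \<times> Phi))) / real (card ({..<n} \<times> (transitions n r {..<n} \<times> Phi)))"
    unfolding random_dfa_def by (simp add: measure_pmf_of_set event flip: space)
  also have "\<dots> = (real n * (real (card Ev) * real (card Phi)))
                 / (real n * (real (card (transitions n r {..<n})) * real (card Phi)))"
    by (simp add: card_cartesian_product)
  also have "\<dots> = real (card Ev) / real (card (transitions n r {..<n}))"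
    using Phi assms by (simp add: card_gt_0_iff)
  finally show ?thesis unfolding Ev_def .
qed

lemma card_transitions_le_restrict:
  assumes C: "C \<subseteq> {..<n}" "card C = m"
    and P: "\<And>f g. \<forall>x\<in>C \<times> {..<r}. f x = g x \<Longrightarrow> P f = P g"
  shows "card {\<tau> \<in> transitions n r {..<n}. P \<tau>} \<le> card {f \<in> transitions n r C. P f} * n ^ ((n - m) * r)"
proof -
  define J where "J = ({..<n} - C) \<times> {..<r}"
  have finC: "finite C" using C finite_subset by blast
  have "transitions n r {..<n} = PiE (C \<times> {..<r} \<union> J) (\<lambda>_. {..<n})"
    unfolding transitions_def J_def using C by (metis Diff_partition Sigma_Un_distrib1)
  hence "card {\<tau> \<in> transitions n r {..<n}. P \<tau>}
           = card {f \<in> PiE (C \<times> {..<r} \<union> J) (\<lambda>_. {..<n}). P f \<and> True}" by simp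
  also have "\<dots> \<le> card {f \<in> transitions n r C. P f} * card {f \<in> PiE J (\<lambda>_. {..<n}). True}"
    unfolding transitions_def using finC P by (intro card_PiE_Un_filter_le) (auto simp: J_def)
  also have "card {f \<in> PiE J (\<lambda>_. {..<n}). True} = n ^ ((n - m) * r)"
    using C finC by (simp add: J_def card_PiE card_cartesian_product card_Diff_subset)
  finally show ?thesis .
qed

lemma chain_bound_pow_le_cycle_weight:
  assumes "1 \<le> p" "2 * p \<le> m" "m \<le> n" "r \<ge> 2"
  shows "chain_bound p p (m - p) ^ r * real n ^ ((n - m) * r) \<le> cycle_weight n m p ^ 2 * real n ^ (n * r)"
proof -
  define \<rho> where "\<rho> = m - p"
  have \<rho>: "1 \<le> \<rho>" "p \<le> \<rho>" "m = p + \<rho>" using assms by (auto simp: \<rho>_def)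
  have npos: "real n > 0" using assms by simp
  define Y where "Y = chain_bound p p \<rho> / real n ^ m"
  define X where "X = cycle_weight n m p"
  have "layer_bound p \<rho> \<le> real \<rho> ^ \<rho> * exp (real p - real \<rho>)"
  proof -
    have "fact (\<rho> - 1) / fact (p - 1) \<le> real \<rho> ^ \<rho> * exp (real p - real \<rho>) / real p ^ p"
      using fact_quotient_le[of p "\<rho> - p"] \<rho> assms by (simp add: of_nat_diff)
    thus ?thesis using assms unfolding layer_bound_def by (simp add: field_simps)
  qed
  hence "real \<rho> ^ p * layer_bound p \<rho> \<le> real \<rho> ^ m * exp (real p - real \<rho>)"
    using \<rho> mult_left_mono[of _ _ "real \<rho> ^ p"] by (simp add: power_add)
  hence "Y \<le> X" using \<rho> npos
    unfolding Y_def X_def cycle_weight_def chain_bound_def \<rho>_def[symmetric]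
    by (simp add: divide_right_mono)
  moreover have "X \<le> 1"
  proof -
    have "real \<rho> ^ m * exp (real p - real \<rho>) \<le> real n ^ m * 1"
      using \<rho> assms by (intro mult_mono power_mono) auto
    thus ?thesis unfolding X_def cycle_weight_def \<rho>_def[symmetric] using npos
      by (simp add: divide_le_eq_1)
  qed
  moreover have "Y \<ge> 0" unfolding Y_def using chain_bound_nonneg by simp
  ultimately have "Y ^ r \<le> X ^ r" "X ^ r \<le> X ^ 2"
    using assms by (auto intro: power_mono power_decreasing)
  hence "Y ^ r \<le> X ^ 2" by linarith
  moreover have "chain_bound p p \<rho> ^ r * real n ^ ((n - m) * r) = Y ^ r * real n ^ (n * r)"
  proof -
    have "real n ^ (n * r) = real n ^ (m * r) * real n ^ ((n - m) * r)"
      using assms by (simp flip: power_add add_mult_distrib)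
    thus ?thesis unfolding Y_def using npos
      by (simp add: power_divide power_mult mult.commute)
  qed
  ultimately show ?thesis unfolding X_def \<rho>_def
    by (metis mult_right_mono of_nat_0_le_iff zero_le_power)
qed

lemma card_cyclic_layers_transitions_le:
  assumes C: "C \<subseteq> {..<n}" "card C = m"
    and P0: "P0 \<subseteq> C" "card P0 = p" "1 \<le> p" "2 * p \<le> m" and "r \<ge> 2"
  shows "real (card {\<tau> \<in> transitions n r {..<n}. cyclic_layers r P0 L P0 (C - P0) \<tau>})
         \<le> cycle_weight n m p ^ 2 * real (card (transitions n r {..<n}))"
proof -
  have finC: "finite C" using C finite_subset by blast
  have split: "P0 \<union> (C - P0) = C" using P0 by auto
  have "card {\<tau> \<in> transitions n r {..<n}. cyclic_layers r P0 L P0 (C - P0) \<tau>}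
          \<le> card {f \<in> transitions n r (P0 \<union> (C - P0)). cyclic_layers r P0 L P0 (C - P0) f}
            * n ^ ((n - m) * r)"
    unfolding split using C P0 by (intro card_transitions_le_restrict cyclic_layers_cong) (auto simp: split)
  hence "real (card {\<tau> \<in> transitions n r {..<n}. cyclic_layers r P0 L P0 (C - P0) \<tau>})
          \<le> real (card {f \<in> transitions n r (P0 \<union> (C - P0)). cyclic_layers r P0 L P0 (C - P0) f})
            * real n ^ ((n - m) * r)"
    unfolding of_nat_power[symmetric] of_nat_mult[symmetric] of_nat_le_iff .
  also have "\<dots> \<le> chain_bound p p (m - p) ^ r * real n ^ ((n - m) * r)"
    using card_cyclic_layers_le[of P0 p P0 "C - P0" n r L] finC P0 C finite_subset
    by (intro mult_right_mono) (auto simp: card_Diff_subset)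
  also have "\<dots> \<le> cycle_weight n m p ^ 2 * real (card (transitions n r {..<n}))"
    using chain_bound_pow_le_cycle_weight[of p m n r] C P0 assms card_mono[of "{..<n}" C]
    by (simp add: transitions_def card_PiE card_cartesian_product)
  finally show ?thesis .
qed

lemma card_periodic_transitions_le:
  assumes "m \<le> n" "r \<ge> 2"
  shows "real (card {\<tau> \<in> transitions n r {..<n}. \<exists>C. periodic_class k n r \<tau> C \<and> card C = m})
         \<le> (\<Sum>p\<in>{1..m div 2}. real (n choose m) * real (m choose p) * cycle_weight n m p ^ 2)
             * real (card (transitions n r {..<n}))"
proof -
  define N where "N = real (card (transitions n r {..<n}))"
  define Cs where "Cs = {C. C \<subseteq> {..<n} \<and> card C = m}"
  define Ps where "Ps C p = {A. A \<subseteq> C \<and> card A = p}" for C :: "nat set" and p :: nat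
  define G where "G C P0 = {\<tau> \<in> transitions n r {..<n}. cyclic_layers r P0 (k - 1) P0 (C - P0) \<tau>}"
    for C P0
  have finCs: "finite Cs" unfolding Cs_def by (rule finite_subset[of _ "Pow {..<n}"]) auto
  have finC: "finite C" if "C \<in> Cs" for C using that finite_subset unfolding Cs_def by blast
  have finPs: "finite (Ps C p)" if "C \<in> Cs" for C p
    unfolding Ps_def by (rule finite_subset[of _ "Pow C"]) (use finC[OF that] in auto)
  have "{\<tau> \<in> transitions n r {..<n}. \<exists>C. periodic_class k n r \<tau> C \<and> card C = m}
          \<subseteq> (\<Union>p\<in>{1..m div 2}. \<Union>C\<in>Cs. \<Union>P0\<in>Ps C p. G C P0)"
    unfolding Cs_def Ps_def G_def by (rule periodic_transitions_subset)
  hence "card {\<tau> \<in> transitions n r {..<n}. \<exists>C. periodic_class k n r \<tau> C \<and> card C = m}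
          \<le> card (\<Union>p\<in>{1..m div 2}. \<Union>C\<in>Cs. \<Union>P0\<in>Ps C p. G C P0)"
    by (intro card_mono finite_subset[OF _ finite_transitions[of "{..<n}" n r]])
       (auto simp: G_def)
  also have "\<dots> \<le> (\<Sum>p\<in>{1..m div 2}. \<Sum>C\<in>Cs. \<Sum>P0\<in>Ps C p. card (G C P0))"
    using finCs finPs by (intro order_trans[OF card_UN_le] sum_mono) auto
  finally have "real (card {\<tau> \<in> transitions n r {..<n}. \<exists>C. periodic_class k n r \<tau> C \<and> card C = m})
      \<le> (\<Sum>p\<in>{1..m div 2}. \<Sum>C\<in>Cs. \<Sum>P0\<in>Ps C p. real (card (G C P0)))"
    unfolding of_nat_sum[symmetric] of_nat_le_iff .
  also have "\<dots> \<le> (\<Sum>p\<in>{1..m div 2}. \<Sum>C\<in>Cs. \<Sum>P0\<in>Ps C p. cycle_weight n m p ^ 2 * N)"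
    unfolding G_def N_def Cs_def Ps_def using assms
    by (intro sum_mono card_cyclic_layers_transitions_le) auto
  also have "\<dots> = (\<Sum>p\<in>{1..m div 2}. real (n choose m) * real (m choose p) * cycle_weight n m p ^ 2) * N"
  proof -
    have "card (Ps C p) = m choose p" if "C \<in> Cs" for C p
      using n_subsets[OF finC[OF that], of p] that unfolding Ps_def Cs_def by simp
    moreover have "card Cs = n choose m" unfolding Cs_def using n_subsets[of "{..<n}" m] by simp
    ultimately show ?thesis by (simp add: sum_distrib_left sum_distrib_right mult_ac)
  qed
  finally show ?thesis unfolding N_def .
qed

lemma prob_has_periodic_class_le:
  assumes "n \<ge> 1" "m \<le> n" "r \<ge> 2"
  shows "measure_pmf.prob (random_dfa n r) {D. has_periodic_class n r k m D}
         \<le> real (m div 2) * exp (- (3/4 - 2 / exp 1) * real m)"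
proof -
  define N where "N = real (card (transitions n r {..<n}))"
  have N: "N > 0" using assms by (auto simp: N_def transitions_def card_PiE card_cartesian_product)
  have "real (card {\<tau> \<in> transitions n r {..<n}. \<exists>C. periodic_class k n r \<tau> C \<and> card C = m})
      \<le> (\<Sum>p\<in>{1..m div 2}. real (n choose m) * real (m choose p) * cycle_weight n m p ^ 2) * N"
    unfolding N_def by (rule card_periodic_transitions_le[OF assms(2,3)])
  also have "\<dots> \<le> (\<Sum>p\<in>{1..m div 2}. exp (- (3/4 - 2 / exp 1) * real m)) * N"
    using assms N by (intro mult_right_mono sum_mono choose_choose_cycle_weight_le) auto
  finally show ?thesis
    unfolding prob_has_periodic_class_eq[OF assms(1)] N_def[symmetric] using N
    by (simp add: divide_le_eq)
qed

theorem lemma3: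
  fixes r :: nat
  assumes "r \<ge> 2"
  shows "\<exists>\<alpha>::real > 0. \<exists>C'::real > 0. \<forall>n m k :: nat.
           n \<ge> 1 \<longrightarrow> m \<le> n \<longrightarrow> 2 \<le> k \<longrightarrow> k \<le> m \<longrightarrow>
           measure_pmf.prob (random_dfa n r) {D. has_periodic_class n r k m D}
             \<le> C' * exp (- \<alpha> * real m)"
proof -
  define \<delta> :: real where "\<delta> = 3/4 - 2 / exp 1"
  have "2 / exp 1 < (2 / (8/3) :: real)" using exp_1_gt_8_div_3 by (intro divide_strict_left_mono) auto
  hence \<delta>: "\<delta> > 0" unfolding \<delta>_def by simp
  have "measure_pmf.prob (random_dfa n r) {D. has_periodic_class n r k m D}
          \<le> 1 / \<delta> * exp (- (\<delta> / 2) * real m)" if "n \<ge> 1" "m \<le> n" for n m k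
  proof -
    have "measure_pmf.prob (random_dfa n r) {D. has_periodic_class n r k m D}
            \<le> real (m div 2) * exp (- \<delta> * real m)"
      using prob_has_periodic_class_le[OF that assms] unfolding \<delta>_def .
    also have "\<dots> \<le> real m / 2 * exp (- \<delta> * real m)" by (rule mult_right_mono) (linarith, simp)
    also have "\<dots> \<le> 1 / \<delta> * exp (- (\<delta> / 2) * real m)" using \<delta> by (rule half_mult_exp_neg_le)
    finally show ?thesis .
  qed
  moreover have "\<delta> / 2 > 0" "1 / \<delta> > 0" using \<delta> by auto
  ultimately show ?thesis by blast
qed

end
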